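(* Let $q$ be a prime power, $r\ge 2$ an integer with $(q,r)\neq(2,2)$, $n=(q^r-1)/(q-1)$, and let $\mathcal{C}\subseteq\mathbb{F}_q^n$ be the $q$-ary Hamming code of redundancy $r$ (of dimension $n-r$). Then $$\mathbb{E}[\mathcal{C}] = nH_n - \sum_{\ell=1}^{r} \frac{1}{\binom{n-1}{n-\ell}} \cdot \frac{1}{\ell!}\prod_{i=0}^{\ell-1}\frac{q^r-q^i}{q-1}.$$
   Context: The $q$-ary Hamming code of redundancy $r$ is the code in $\mathbb{F}_q^n$, $n=(q^r-1)/(q-1)$, whose parity-check matrix has as columns representatives of all nonzero vectors of $\mathbb{F}_q^r$ up to nonzero scalar multiples; its dual is the $r$-dimensional simplex code. $H_m=\sum_{i=1}^m 1/i$. For a linear code $\mathcal{C}$ of dimension $k$, $\mathbb{E}[\mathcal{C}]$ is $\mathbb{E}[G]$ for any generator matrix $G\in\mathbb{F}_q^{k\times n}$, the expected number of draws when columns of $G$ are drawn independently and uniformly at random from its $n$ columns (with repetition) until the drawn columns span $\mathbb{F}_q^k$. *)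

theory Defs
  imports "HOL-Analysis.Analysis" "HOL-Library.FuncSet"
begin

text \<open>Vectors in F^m are represented as functions nat => 'a vanishing from index m on.\<close>

definition fvec :: "nat \<Rightarrow> (nat \<Rightarrow> 'a::zero) set" where
  "fvec m = {v. \<forall>i\<ge>m. v i = 0}"

definition spans :: "nat \<Rightarrow> (nat \<Rightarrow> 'a::field) set \<Rightarrow> bool" where
  "spans m S \<longleftrightarrow> (\<forall>v\<in>fvec m. \<exists>c. v = (\<lambda>i. \<Sum>s\<in>S. c s * s i))"

text \<open>h 0, ..., h (n-1) are the columns of a parity-check matrix of the q-ary Hamming code
  of redundancy r: nonzero vectors of F^r, one representative of each nonzero vector up to
  nonzero scalar multiples.\<close>
definition hamming_pcm :: "nat \<Rightarrow> nat \<Rightarrow> (nat \<Rightarrow> nat \<Rightarrow> 'a::field) \<Rightarrow> bool" where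
  "hamming_pcm r n h \<longleftrightarrow>
     (\<forall>j<n. h j \<in> fvec r \<and> h j \<noteq> (\<lambda>_. 0)) \<and>
     (\<forall>v\<in>fvec r. v \<noteq> (\<lambda>_. 0) \<longrightarrow> (\<exists>!j. j < n \<and> (\<exists>c. c \<noteq> 0 \<and> v = (\<lambda>i. c * h j i))))"

definition code_of_pcm :: "nat \<Rightarrow> nat \<Rightarrow> (nat \<Rightarrow> nat \<Rightarrow> 'a::field) \<Rightarrow> (nat \<Rightarrow> 'a) set" where
  "code_of_pcm r n h = {x \<in> fvec n. \<forall>i<r. (\<Sum>j<n. h j i * x j) = 0}"

definition is_generator_matrix :: "nat \<Rightarrow> nat \<Rightarrow> (nat \<Rightarrow> nat \<Rightarrow> 'a::field) \<Rightarrow> (nat \<Rightarrow> 'a) set \<Rightarrow> bool" where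
  "is_generator_matrix k n g C \<longleftrightarrow>
     (\<forall>i<k. g i \<in> C) \<and>
     (\<forall>c. (\<forall>j. (\<Sum>i<k. c i * g i j) = 0) \<longrightarrow> (\<forall>i<k. c i = 0)) \<and>
     (\<forall>x\<in>C. \<exists>c. x = (\<lambda>j. \<Sum>i<k. c i * g i j))"

definition gcol :: "nat \<Rightarrow> (nat \<Rightarrow> nat \<Rightarrow> 'a::zero) \<Rightarrow> nat \<Rightarrow> nat \<Rightarrow> 'a" where
  "gcol k g j = (\<lambda>i. if i < k then g i j else 0)"

text \<open>Probability that, drawing column indices independently and uniformly from {0..<n},
  the drawn columns span F^k for the first time after exactly t draws (the outcome of t
  draws is a function d : {0..<t} -> {0..<n}, all n^t outcomes equally likely).\<close>
definition stop_prob :: "nat \<Rightarrow> nat \<Rightarrow> (nat \<Rightarrow> nat \<Rightarrow> 'a::field) \<Rightarrow> nat \<Rightarrow> real" where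
  "stop_prob k n g t =
     real (card {d \<in> {..<t} \<rightarrow>\<^sub>E {..<n}.
                  spans k ((\<lambda>s. gcol k g (d s)) ` {..<t}) \<and>
                  \<not> spans k ((\<lambda>s. gcol k g (d s)) ` {..<t - 1})}) / real n ^ t"

end

(*
  Let T be the number of draws until the drawn columns span F_q^k, and let A be the set of
  indices drawn so far. Then E[T] = sum over t >= 0 of P(T > t), and P(T > t) is the sum, over
  the non-spanning A, of the probability that the first t draws hit exactly A. Summed over t,
  that probability equals 1 / binom(n - 1, |A|): conditioning on the last draw gives a linear
  recursion in |A|.

  The generator columns indexed by A span F_q^k iff the parity-check columns indexed by the
  complement B are linearly independent, so E[T] is the sum of 1 / binom(n - 1, n - |B|) over
  the dependent sets B, i.e. n H_n (the sum over all nonempty B) minus the sum over the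
  nonempty independent B. Since the columns of a Hamming matrix represent the points of
  projective space, the ordered independent l-tuples of vectors of F_q^r are exactly the
  ordered independent l-tuples of columns with a nonzero scalar attached to each; hence there
  are (1/l!) prod_{i<l} (q^r - q^i) / (q - 1) independent l-sets of columns.
*)
theory Submission
  imports Defs "HOL-Combinatorics.Multiset_Permutations"
begin

section \<open>Expected time until the drawn index set has a monotone property\<close>

definition onto_maps :: "nat \<Rightarrow> 'a set \<Rightarrow> (nat \<Rightarrow> 'a) set" where
  "onto_maps t S = {d \<in> {..<t} \<rightarrow>\<^sub>E S. d ` {..<t} = S}"

lemma finite_onto_maps: "finite S \<Longrightarrow> finite (onto_maps t S)"
  unfolding onto_maps_def by (rule finite_subset[of _ "{..<t} \<rightarrow>\<^sub>E S"]) (auto intro: finite_PiE)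

lemma onto_maps_0: "S \<noteq> {} \<Longrightarrow> onto_maps 0 S = {}"
  unfolding onto_maps_def by auto

lemma onto_maps_empty: "onto_maps t {} = (if t = 0 then {\<lambda>_. undefined} else {})"
  unfolding onto_maps_def by (auto simp: PiE_eq_empty_iff)

lemma card_PiE_lessThan_Suc:
  "card {e \<in> {..<Suc t} \<rightarrow>\<^sub>E A. R (e t) (restrict e {..<t})} =
   card (Sigma A (\<lambda>y. {d \<in> {..<t} \<rightarrow>\<^sub>E A. R y d}))"
proof -
  have restrict_upd: "restrict (d(t := y)) {..<t} = d" if "d \<in> {..<t} \<rightarrow>\<^sub>E A" for d y
    using that by (auto simp: PiE_iff extensional_def fun_eq_iff)
  have "bij_betw (\<lambda>(y, d). d(t := y)) (Sigma A (\<lambda>y. {d \<in> {..<t} \<rightarrow>\<^sub>E A. R y d}))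
          {e \<in> {..<Suc t} \<rightarrow>\<^sub>E A. R (e t) (restrict e {..<t})}"
  proof (rule bij_betw_byWitness[where f' = "\<lambda>e. (e t, restrict e {..<t})"])
    have "(restrict e {..<t})(t := e t) = e" if "e \<in> {..<Suc t} \<rightarrow>\<^sub>E A" for e
      using that by (auto simp: PiE_iff extensional_def fun_eq_iff less_Suc_eq)
    then show "\<forall>e\<in>{e \<in> {..<Suc t} \<rightarrow>\<^sub>E A. R (e t) (restrict e {..<t})}.
                 (\<lambda>(y, d). d(t := y)) (e t, restrict e {..<t}) = e"
      by simp
    have "d(t := y) \<in> {..<Suc t} \<rightarrow>\<^sub>E A" if "y \<in> A" "d \<in> {..<t} \<rightarrow>\<^sub>E A" for y d
      using that by (auto simp: PiE_iff extensional_def)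
    then show "(\<lambda>(y, d). d(t := y)) ` Sigma A (\<lambda>y. {d \<in> {..<t} \<rightarrow>\<^sub>E A. R y d})
               \<subseteq> {e \<in> {..<Suc t} \<rightarrow>\<^sub>E A. R (e t) (restrict e {..<t})}"
      by (auto simp: restrict_upd)
    show "\<forall>p\<in>Sigma A (\<lambda>y. {d \<in> {..<t} \<rightarrow>\<^sub>E A. R y d}).
            (\<lambda>e. (e t, restrict e {..<t})) ((\<lambda>(y, d). d(t := y)) p) = p"
    proof
      fix p assume "p \<in> Sigma A (\<lambda>y. {d \<in> {..<t} \<rightarrow>\<^sub>E A. R y d})"
      then obtain y d where "p = (y, d)" "d \<in> {..<t} \<rightarrow>\<^sub>E A" by blast
      then show "(\<lambda>e. (e t, restrict e {..<t})) ((\<lambda>(y, d). d(t := y)) p) = p"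
        by (simp add: restrict_upd)
    qed
    show "(\<lambda>e. (e t, restrict e {..<t})) ` {e \<in> {..<Suc t} \<rightarrow>\<^sub>E A. R (e t) (restrict e {..<t})}
          \<subseteq> Sigma A (\<lambda>y. {d \<in> {..<t} \<rightarrow>\<^sub>E A. R y d})"
      by (auto simp: PiE_iff)
  qed
  then show ?thesis by (simp add: bij_betw_same_card)
qed

lemma card_onto_maps_Suc:
  assumes "finite S"
  shows "card (onto_maps (Suc t) S) =
         card S * card (onto_maps t S) + (\<Sum>y\<in>S. card (onto_maps t (S - {y})))"
proof -
  have split: "{d \<in> {..<t} \<rightarrow>\<^sub>E S. insert y (d ` {..<t}) = S} = onto_maps t S \<union> onto_maps t (S - {y})"
    if "y \<in> S" for y
  proof (intro equalityI subsetI)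
    fix d assume d: "d \<in> {d \<in> {..<t} \<rightarrow>\<^sub>E S. insert y (d ` {..<t}) = S}"
    show "d \<in> onto_maps t S \<union> onto_maps t (S - {y})"
    proof (cases "y \<in> d ` {..<t}")
      case True
      then show ?thesis using d by (simp add: onto_maps_def insert_absorb)
    next
      case False
      then have "d ` {..<t} = S - {y}" using d by auto
      moreover from this have "d \<in> {..<t} \<rightarrow>\<^sub>E (S - {y})" using d by (auto simp: PiE_iff)
      ultimately show ?thesis by (simp add: onto_maps_def)
    qed
  next
    fix d assume "d \<in> onto_maps t S \<union> onto_maps t (S - {y})"
    then show "d \<in> {d \<in> {..<t} \<rightarrow>\<^sub>E S. insert y (d ` {..<t}) = S}"
      using that by (auto simp: onto_maps_def PiE_iff)
  qed
  have "card (onto_maps (Suc t) S) = card {e \<in> {..<Suc t} \<rightarrow>\<^sub>E S.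
          (\<lambda>y d. insert y (d ` {..<t}) = S) (e t) (restrict e {..<t})}"
    unfolding onto_maps_def by (simp add: lessThan_Suc)
  also have "\<dots> = card (Sigma S (\<lambda>y. {d \<in> {..<t} \<rightarrow>\<^sub>E S. insert y (d ` {..<t}) = S}))"
    by (rule card_PiE_lessThan_Suc)
  also have "\<dots> = (\<Sum>y\<in>S. card (onto_maps t S \<union> onto_maps t (S - {y})))"
    using assms by (simp add: card_SigmaI split finite_onto_maps)
  also have "\<dots> = (\<Sum>y\<in>S. card (onto_maps t S) + card (onto_maps t (S - {y})))"
    using assms by (intro sum.cong refl card_Un_disjoint finite_onto_maps) (auto simp: onto_maps_def)
  finally show ?thesis by (simp add: sum.distrib)
qed

lemma card_maps_by_image:
  assumes "finite A"
  shows "card {d \<in> {..<t} \<rightarrow>\<^sub>E A. Q (d ` {..<t})} = (\<Sum>S | S \<subseteq> A \<and> Q S. card (onto_maps t S))"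
proof -
  have "card {d \<in> {..<t} \<rightarrow>\<^sub>E A. Q (d ` {..<t})} = card (\<Union>S \<in> {S. S \<subseteq> A \<and> Q S}. onto_maps t S)"
    unfolding onto_maps_def by (rule arg_cong[where f = card]) (auto simp: PiE_iff)
  also have "\<dots> = (\<Sum>S | S \<subseteq> A \<and> Q S. card (onto_maps t S))"
  proof (rule card_UN_disjoint)
    show "\<forall>S\<in>{S. S \<subseteq> A \<and> Q S}. finite (onto_maps t S)"
      using assms by (auto intro: finite_onto_maps finite_subset)
  qed (use assms in \<open>auto simp: onto_maps_def\<close>)
  finally show ?thesis .
qed

lemma card_onto_maps_le: "finite S \<Longrightarrow> card (onto_maps t S) \<le> card S ^ t"
proof -
  assume "finite S"
  then have "card (onto_maps t S) \<le> card ({..<t} \<rightarrow>\<^sub>E S)"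
    unfolding onto_maps_def by (intro card_mono finite_PiE) auto
  then show ?thesis by (simp add: card_PiE)
qed

definition exact_image_prob :: "nat \<Rightarrow> 'a set \<Rightarrow> nat \<Rightarrow> real" where
  "exact_image_prob n S t = real (card (onto_maps t S)) / real n ^ t"

lemma exact_image_prob_nonneg: "exact_image_prob n S t \<ge> 0"
  unfolding exact_image_prob_def by simp

lemma exact_image_prob_le:
  assumes "finite S"
  shows "exact_image_prob n S t \<le> (real (card S) / real n) ^ t"
proof -
  have "real (card (onto_maps t S)) \<le> real (card S) ^ t"
    using card_onto_maps_le[OF assms] by (metis of_nat_le_iff of_nat_power)
  then show ?thesis
    unfolding exact_image_prob_def power_divide by (simp add: divide_right_mono)
qed

lemma exact_image_prob_Suc:
  assumes "finite S" "n > 0"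
  shows "exact_image_prob n S (Suc t) =
         real (card S) / real n * exact_image_prob n S t +
         (\<Sum>y\<in>S. exact_image_prob n (S - {y}) t) / real n"
  using assms(2)
  by (simp add: exact_image_prob_def card_onto_maps_Suc[OF assms(1)] sum_divide_distrib
      add_divide_distrib mult_ac)

lemma summable_exact_image_prob:
  assumes "finite S" "card S < n"
  shows "summable (exact_image_prob n S)"
proof (rule summable_comparison_test'[OF summable_geometric])
  show "norm (real (card S) / real n) < 1"
    using assms by simp
  show "norm (exact_image_prob n S t) \<le> (real (card S) / real n) ^ t" for t
    by (simp add: abs_of_nonneg exact_image_prob_nonneg exact_image_prob_le[OF assms(1)])
qed

lemma index_times_exact_image_prob_tendsto_0:
  assumes "finite S" "card S < n"
  shows "(\<lambda>t. real t * exact_image_prob n S t) \<longlonglongrightarrow> 0"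
proof (rule Lim_null_comparison)
  show "(\<lambda>t. real t * (real (card S) / real n) ^ t) \<longlonglongrightarrow> 0"
    by (rule powser_times_n_limit_0) (use assms in simp)
  show "\<forall>\<^sub>F t in sequentially. norm (real t * exact_image_prob n S t)
          \<le> real t * (real (card S) / real n) ^ t"
    by (intro always_eventually allI)
      (simp add: abs_mult abs_of_nonneg exact_image_prob_nonneg mult_left_mono
        exact_image_prob_le[OF assms(1)])
qed

lemma inverse_binomial_Suc:
  assumes "Suc j < n"
  shows "1 / real ((n - 1) choose Suc j) =
         real (Suc j) * (1 / real ((n - 1) choose j)) / (real n - real (Suc j))"
proof -
  have "Suc j * ((n - 1) choose Suc j) = (n - Suc j) * ((n - 1) choose j)"
    using binomial_absorb_comp[of "n - 1" j] binomial_absorption[of j "n - 1"] by simp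
  then have "real (Suc j) * real ((n - 1) choose Suc j) = real (n - Suc j) * real ((n - 1) choose j)"
    by (metis of_nat_mult)
  also have "real (n - Suc j) = real n - real (Suc j)"
    using assms by (simp add: of_nat_diff)
  finally have eq: "(real n - real (Suc j)) * real ((n - 1) choose j) =
                    real (Suc j) * real ((n - 1) choose Suc j)" ..
  have "real (Suc j) * (1 / real ((n - 1) choose j)) / (real n - real (Suc j)) =
        real (Suc j) / ((real n - real (Suc j)) * real ((n - 1) choose j))"
    by simp
  also have "\<dots> = real (Suc j) / (real (Suc j) * real ((n - 1) choose Suc j))"
    by (simp only: eq)
  also have "\<dots> = 1 / real ((n - 1) choose Suc j)"
    by simp
  finally show ?thesis ..
qed

lemma sums_exact_image_prob:
  assumes "finite S" "card S < n"
  shows "exact_image_prob n S sums (1 / real ((n - 1) choose card S))"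
  using assms
proof (induction "card S" arbitrary: S)
  case 0
  then have "exact_image_prob n S = (\<lambda>t. if t = 0 then 1 else 0)"
    by (auto simp: exact_image_prob_def onto_maps_empty fun_eq_iff)
  then show ?case
    using sums_single[of 0 "\<lambda>_. 1 :: real"] 0 by simp
next
  case (Suc j S)
  let ?p = "exact_image_prob n"
  let ?w = "1 / real ((n - 1) choose j)"
  have n: "n > 0" and j: "Suc j < n"
    using Suc by linarith+
  obtain s where s: "?p S sums s"
    using summable_exact_image_prob[OF Suc.prems] by (auto simp: summable_def)
  have IH: "?p (S - {y}) sums ?w" if "y \<in> S" for y
  proof -
    have j_eq: "j = card (S - {y})"
      using Suc.hyps(2) Suc.prems(1) that by simp
    show ?thesis
      unfolding j_eq by (rule Suc.hyps(1)[OF j_eq]) (use Suc.prems Suc.hyps(2) j_eq in auto)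
  qed
  have "S \<noteq> {}"
    using Suc.hyps(2) by auto
  then have "?p S 0 = 0"
    by (simp add: exact_image_prob_def onto_maps_0)
  then have "(\<lambda>t. ?p S (Suc t)) sums s"
    using s sums_Suc_iff[of "?p S" s] by simp
  moreover have "(\<lambda>t. ?p S (Suc t)) sums (real (card S) / real n * s + (\<Sum>y\<in>S. ?w) / real n)"
    unfolding exact_image_prob_Suc[OF Suc.prems(1) n]
    by (intro sums_add sums_mult sums_divide sums_sum s IH)
  ultimately have "s = real (card S) / real n * s + (\<Sum>y\<in>S. ?w) / real n"
    by (rule sums_unique2)
  then have "s = real (Suc j) * ?w / (real n - real (Suc j))"
    using n j Suc.hyps(2) by (simp add: field_simps)
  then show ?case
    using s Suc.hyps(2) inverse_binomial_Suc[OF j] by simp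
qed

text \<open>Summation by parts; with b t = P(T > t) it reads E[T] = \<Sum>t. P(T > t).\<close>

lemma sums_times_index_diff:
  fixes b :: "nat \<Rightarrow> real"
  assumes "b sums s" "(\<lambda>t. real t * b t) \<longlonglongrightarrow> 0"
  shows "(\<lambda>t. real t * (b (t - 1) - b t)) sums s"
proof -
  have partial: "(\<Sum>t<Suc T. real t * (b (t - 1) - b t)) = (\<Sum>t<T. b t) - real T * b T" for T
    by (induction T) (auto simp: algebra_simps)
  have "(\<lambda>T. (\<Sum>t<T. b t) - real T * b T) \<longlonglongrightarrow> s - 0"
    using assms unfolding sums_def by (intro tendsto_diff)
  then have "(\<lambda>T. \<Sum>t<Suc T. real t * (b (t - 1) - b t)) \<longlonglongrightarrow> s"
    by (simp only: partial diff_zero)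
  then show ?thesis
    unfolding sums_def by (rule LIMSEQ_imp_Suc)
qed

lemma card_first_hit_Suc:
  assumes mono: "\<And>A B. A \<subseteq> B \<Longrightarrow> B \<subseteq> {..<n} \<Longrightarrow> P A \<Longrightarrow> P B"
  shows "card {d \<in> {..<Suc t} \<rightarrow>\<^sub>E {..<n}. P (d ` {..<Suc t}) \<and> \<not> P (d ` {..<t})} +
         card {d \<in> {..<Suc t} \<rightarrow>\<^sub>E {..<n}. \<not> P (d ` {..<Suc t})} =
         n * card {d \<in> {..<t} \<rightarrow>\<^sub>E {..<n}. \<not> P (d ` {..<t})}"
proof -
  let ?D = "{..<Suc t} \<rightarrow>\<^sub>E {..<n}"
  have "\<not> P (d ` {..<t})" if "d \<in> ?D" "\<not> P (d ` {..<Suc t})" for d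
  proof
    assume "P (d ` {..<t})"
    moreover have "d ` {..<Suc t} \<subseteq> {..<n}"
      using that(1) by (auto simp: PiE_iff)
    ultimately show False
      using that(2) mono[of "d ` {..<t}" "d ` {..<Suc t}"] by (auto simp: image_mono)
  qed
  then have parts: "{d \<in> ?D. \<not> P (d ` {..<t})} =
             {d \<in> ?D. P (d ` {..<Suc t}) \<and> \<not> P (d ` {..<t})} \<union> {d \<in> ?D. \<not> P (d ` {..<Suc t})}"
    by blast
  have "card {d \<in> ?D. P (d ` {..<Suc t}) \<and> \<not> P (d ` {..<t})} + card {d \<in> ?D. \<not> P (d ` {..<Suc t})} =
             card {d \<in> ?D. \<not> P (d ` {..<t})}"
    unfolding parts by (rule card_Un_disjoint[symmetric]) (auto simp: finite_PiE)
  also have "\<dots> = card {e \<in> ?D. (\<lambda>y d. \<not> P (d ` {..<t})) (e t) (restrict e {..<t})}"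
    by simp
  also have "\<dots> = card ({..<n} \<times> {d \<in> {..<t} \<rightarrow>\<^sub>E {..<n}. \<not> P (d ` {..<t})})"
    by (rule card_PiE_lessThan_Suc)
  also have "\<dots> = n * card {d \<in> {..<t} \<rightarrow>\<^sub>E {..<n}. \<not> P (d ` {..<t})}"
    by (simp add: card_cartesian_product)
  finally show ?thesis .
qed

lemma first_hit_prob_Suc:
  assumes "n > 0"
    and mono: "\<And>A B. A \<subseteq> B \<Longrightarrow> B \<subseteq> {..<n} \<Longrightarrow> P A \<Longrightarrow> P B"
  shows "real (card {d \<in> {..<Suc m} \<rightarrow>\<^sub>E {..<n}. P (d ` {..<Suc m}) \<and> \<not> P (d ` {..<m})}) /
           real n ^ Suc m =
         (\<Sum>S | S \<subseteq> {..<n} \<and> \<not> P S. exact_image_prob n S m - exact_image_prob n S (Suc m))"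
proof -
  define avoid where "avoid (t :: nat) = card {d \<in> {..<t} \<rightarrow>\<^sub>E {..<n}. \<not> P (d ` {..<t})}" for t
  define hit where "hit = card {d \<in> {..<Suc m} \<rightarrow>\<^sub>E {..<n}. P (d ` {..<Suc m}) \<and> \<not> P (d ` {..<m})}"
  have avoid: "real (avoid t) / real n ^ t = (\<Sum>S | S \<subseteq> {..<n} \<and> \<not> P S. exact_image_prob n S t)" for t
    using card_maps_by_image[of "{..<n}" t "\<lambda>S. \<not> P S"]
    by (simp add: avoid_def exact_image_prob_def sum_divide_distrib)
  have "hit + avoid (Suc m) = n * avoid m"
    using card_first_hit_Suc[of n P m, OF mono] by (simp add: hit_def avoid_def)
  then have "real hit = real n * real (avoid m) - real (avoid (Suc m))"
    by (metis add_diff_cancel_right' of_nat_add of_nat_mult)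
  then have "real hit / real n ^ Suc m = real (avoid m) / real n ^ m - real (avoid (Suc m)) / real n ^ Suc m"
    using \<open>n > 0\<close> by (simp add: field_simps)
  also have "\<dots> = (\<Sum>S | S \<subseteq> {..<n} \<and> \<not> P S. exact_image_prob n S m - exact_image_prob n S (Suc m))"
    by (simp only: avoid sum_subtractf)
  finally show ?thesis
    unfolding hit_def .
qed

lemma expected_first_hitting_time:
  assumes "n > 0"
    and mono: "\<And>A B. A \<subseteq> B \<Longrightarrow> B \<subseteq> {..<n} \<Longrightarrow> P A \<Longrightarrow> P B"
    and "P {..<n}"
  shows "(\<lambda>t. real t *
           (real (card {d \<in> {..<t} \<rightarrow>\<^sub>E {..<n}. P (d ` {..<t}) \<and> \<not> P (d ` {..<t - 1})}) / real n ^ t))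
         sums (\<Sum>S | S \<subseteq> {..<n} \<and> \<not> P S. 1 / real ((n - 1) choose card S))"
proof -
  define F where "F = {S. S \<subseteq> {..<n} \<and> \<not> P S}"
  have F: "finite S \<and> card S < n" if "S \<in> F" for S
  proof -
    have "S \<subset> {..<n}"
      using that \<open>P {..<n}\<close> unfolding F_def by blast
    then show ?thesis
      using psubset_card_mono[of "{..<n}" S] finite_subset[of S "{..<n}"] by auto
  qed
  have "(\<lambda>t. \<Sum>S\<in>F. real t * (exact_image_prob n S (t - 1) - exact_image_prob n S t))
          sums (\<Sum>S\<in>F. 1 / real ((n - 1) choose card S))"
    using F by (intro sums_sum sums_times_index_diff sums_exact_image_prob
        index_times_exact_image_prob_tendsto_0) auto
  moreover have "real t *
      (real (card {d \<in> {..<t} \<rightarrow>\<^sub>E {..<n}. P (d ` {..<t}) \<and> \<not> P (d ` {..<t - 1})}) / real n ^ t) =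
      (\<Sum>S\<in>F. real t * (exact_image_prob n S (t - 1) - exact_image_prob n S t))" for t
  proof (cases t)
    case (Suc m)
    then have "real (card {d \<in> {..<t} \<rightarrow>\<^sub>E {..<n}. P (d ` {..<t}) \<and> \<not> P (d ` {..<t - 1})}) / real n ^ t =
               (\<Sum>S\<in>F. exact_image_prob n S (t - 1) - exact_image_prob n S t)"
      using first_hit_prob_Suc[where m = m, OF \<open>n > 0\<close> mono] by (simp add: F_def)
    then show ?thesis
      by (simp only: sum_distrib_left)
  qed simp
  ultimately show ?thesis
    by (simp add: F_def)
qed

section \<open>Spanning generator columns and independent parity-check columns\<close>

definition lin_combs :: "'b set \<Rightarrow> ('b \<Rightarrow> nat \<Rightarrow> 'a::field) \<Rightarrow> (nat \<Rightarrow> 'a) set" where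
  "lin_combs S f = {\<lambda>i. \<Sum>s\<in>S. c s * f s i | c. True}"

lemma spans_iff_lin_combs: "spans m S \<longleftrightarrow> fvec m \<subseteq> lin_combs S (\<lambda>s. s)"
  unfolding spans_def lin_combs_def by blast

lemma zero_in_lin_combs: "(\<lambda>_. 0) \<in> lin_combs S f"
  unfolding lin_combs_def by (auto intro!: exI[of _ "\<lambda>_. 0"])

lemma lin_combs_add:
  assumes "u \<in> lin_combs S f" "v \<in> lin_combs S f"
  shows "(\<lambda>i. u i + v i) \<in> lin_combs S f"
proof -
  obtain c d where "u = (\<lambda>i. \<Sum>s\<in>S. c s * f s i)" "v = (\<lambda>i. \<Sum>s\<in>S. d s * f s i)"
    using assms unfolding lin_combs_def by blast
  then show ?thesis
    unfolding lin_combs_def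
    by (auto intro!: exI[of _ "\<lambda>s. c s + d s"] simp: distrib_right sum.distrib)
qed

lemma lin_combs_scale:
  assumes "v \<in> lin_combs S f"
  shows "(\<lambda>i. a * v i) \<in> lin_combs S f"
proof -
  obtain c where "v = (\<lambda>i. \<Sum>s\<in>S. c s * f s i)"
    using assms unfolding lin_combs_def by blast
  then show ?thesis
    unfolding lin_combs_def
    by (auto intro!: exI[of _ "\<lambda>s. a * c s"] simp: sum_distrib_left mult.assoc)
qed

lemma generator_in_lin_combs:
  assumes "finite S" "s \<in> S"
  shows "f s \<in> lin_combs S f"
  unfolding lin_combs_def
proof (intro CollectI exI conjI)
  show "f s = (\<lambda>i. \<Sum>t\<in>S. of_bool (t = s) * f t i)"
    using assms by (simp add: Int_absorb1)
qed simp

lemma lin_combs_subset: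
  assumes "finite S" "\<forall>s\<in>S. g s \<in> lin_combs T f"
  shows "lin_combs S g \<subseteq> lin_combs T f"
proof
  fix v assume "v \<in> lin_combs S g"
  then obtain c where v: "v = (\<lambda>i. \<Sum>s\<in>S. c s * g s i)"
    unfolding lin_combs_def by blast
  have "(\<lambda>i. \<Sum>s\<in>S'. c s * g s i) \<in> lin_combs T f" if "S' \<subseteq> S" for S'
    using finite_subset[OF that assms(1)] that
  proof (induction S' rule: finite_induct)
    case (insert s S')
    then show ?case
      using assms(2) by (simp add: lin_combs_add lin_combs_scale)
  qed (simp add: zero_in_lin_combs)
  then show "v \<in> lin_combs T f"
    using v by blast
qed

lemma fvec_eliminate_last:
  fixes v w :: "nat \<Rightarrow> 'a::field"
  assumes "v \<in> fvec (Suc k)" "w \<in> fvec (Suc k)" "w k \<noteq> 0"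
  shows "(\<lambda>i. v i - v k / w k * w i) \<in> fvec k"
  unfolding fvec_def
proof (intro CollectI allI impI)
  fix i assume "k \<le> i"
  then consider "i = k" | "Suc k \<le> i"
    by linarith
  then show "v i - v k / w k * w i = 0"
    using assms by cases (auto simp: fvec_def)
qed

lemma annihilator_extend_last:
  fixes f :: "'b \<Rightarrow> nat \<Rightarrow> 'a::field"
  assumes "f s0 k \<noteq> 0"
    and "(\<Sum>i<k. c i * (f s i - f s k / f s0 k * f s0 i)) = 0"
  shows "(\<Sum>i<Suc k. (c(k := - (\<Sum>i<k. c i * f s0 i) / f s0 k)) i * f s i) = 0"
proof -
  let ?D = "\<Sum>i<k. c i * f s0 i"
  have "(\<Sum>i<k. (c(k := - ?D / f s0 k)) i * f s i) = (\<Sum>i<k. c i * f s i)"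
    by (intro sum.cong) auto
  then have "(\<Sum>i<Suc k. (c(k := - ?D / f s0 k)) i * f s i) =
             (\<Sum>i<k. c i * f s i) - f s k / f s0 k * ?D"
    by simp
  also have "\<dots> = (\<Sum>i<k. c i * (f s i - f s k / f s0 k * f s0 i))"
    by (simp add: right_diff_distrib sum_subtractf sum_distrib_left mult.left_commute)
  finally show ?thesis
    using assms(2) by simp
qed

lemma fvec_Suc_subset_lin_combs:
  fixes f :: "'b \<Rightarrow> nat \<Rightarrow> 'a::field"
  assumes S: "finite S" "s0 \<in> S" and pivot: "f s0 k \<noteq> 0" "f s0 \<in> fvec (Suc k)"
    and span: "fvec k \<subseteq> lin_combs S (\<lambda>s i. f s i - f s k / f s0 k * f s0 i)"
  shows "fvec (Suc k) \<subseteq> lin_combs S f"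
proof
  have "(\<lambda>i. f s i + (- (f s k / f s0 k)) * f s0 i) \<in> lin_combs S f" if "s \<in> S" for s
    using S that by (intro lin_combs_add lin_combs_scale generator_in_lin_combs)
  then have sub: "lin_combs S (\<lambda>s i. f s i - f s k / f s0 k * f s0 i) \<subseteq> lin_combs S f"
    using S(1) by (intro lin_combs_subset) auto
  fix v :: "nat \<Rightarrow> 'a"
  assume "v \<in> fvec (Suc k)"
  then have "(\<lambda>i. v i - v k / f s0 k * f s0 i) \<in> lin_combs S f"
    using fvec_eliminate_last[OF _ pivot(2,1)] span sub by blast
  then have "(\<lambda>i. (v i - v k / f s0 k * f s0 i) + v k / f s0 k * f s0 i) \<in> lin_combs S f"
    using S by (intro lin_combs_add lin_combs_scale generator_in_lin_combs)
  then show "v \<in> lin_combs S f"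
    by simp
qed

lemma spans_or_annihilator:
  fixes f :: "'b \<Rightarrow> nat \<Rightarrow> 'a::field"
  assumes "finite S" "\<forall>s\<in>S. f s \<in> fvec k"
  shows "fvec k \<subseteq> lin_combs S f \<or> (\<exists>c. (\<exists>i<k. c i \<noteq> 0) \<and> (\<forall>s\<in>S. (\<Sum>i<k. c i * f s i) = 0))"
  using assms(2)
proof (induction k arbitrary: f)
  case 0
  have "fvec 0 = {\<lambda>_. 0 :: 'a}"
    by (auto simp: fvec_def)
  then show ?case
    using zero_in_lin_combs by simp
next
  case (Suc k)
  show ?case
  proof (cases "\<exists>s0\<in>S. f s0 k \<noteq> 0")
    case False
    then have "\<forall>s\<in>S. (\<Sum>i<Suc k. of_bool (i = k) * f s i) = 0"
      by simp
    then show ?thesis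
      by (intro disjI2 exI[of _ "\<lambda>i. of_bool (i = k)"]) auto
  next
    case True
    then obtain s0 where s0: "s0 \<in> S" "f s0 k \<noteq> 0"
      by blast
    define f' where "f' = (\<lambda>s i. f s i - f s k / f s0 k * f s0 i)"
    have "\<forall>s\<in>S. f' s \<in> fvec k"
      using Suc.prems s0 unfolding f'_def by (blast intro: fvec_eliminate_last)
    from Suc.IH[OF this] show ?thesis
    proof
      assume "fvec k \<subseteq> lin_combs S f'"
      then have "fvec (Suc k) \<subseteq> lin_combs S f"
        using fvec_Suc_subset_lin_combs[of S s0 f k, OF assms(1) s0] Suc.prems s0(1) unfolding f'_def by blast
      then show ?thesis ..
    next
      assume "\<exists>c. (\<exists>i<k. c i \<noteq> 0) \<and> (\<forall>s\<in>S. (\<Sum>i<k. c i * f' s i) = 0)"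
      then obtain c where nz: "\<exists>i<k. c i \<noteq> 0" and orth: "\<forall>s\<in>S. (\<Sum>i<k. c i * f' s i) = 0"
        by blast
      define c' where "c' = c(k := - (\<Sum>i<k. c i * f s0 i) / f s0 k)"
      have "\<exists>i<Suc k. c' i \<noteq> 0"
        using nz by (auto simp: c'_def)
      moreover have "\<forall>s\<in>S. (\<Sum>i<Suc k. c' i * f s i) = 0"
        using annihilator_extend_last[of f s0 k, OF s0(2)] orth unfolding f'_def c'_def by blast
      ultimately show ?thesis
        by blast
    qed
  qed
qed

lemma orthogonal_to_spanning_eq_0:
  fixes c :: "nat \<Rightarrow> 'a::field"
  assumes "spans k S" "\<forall>s\<in>S. (\<Sum>i<k. c i * s i) = 0" "m < k"
  shows "c m = 0"
proof -
  have "(\<lambda>i. of_bool (i = m)) \<in> fvec k"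
    using assms(3) by (simp add: fvec_def)
  then obtain d where d: "(\<lambda>i. of_bool (i = m)) = (\<lambda>i. \<Sum>s\<in>S. d s * s i)"
    using assms(1) unfolding spans_def by blast
  have "c m = (\<Sum>i<k. c i * of_bool (i = m))"
    using assms(3) by simp
  also have "\<dots> = (\<Sum>i<k. c i * (\<Sum>s\<in>S. d s * s i))"
    using d by (simp add: fun_eq_iff)
  also have "\<dots> = (\<Sum>s\<in>S. d s * (\<Sum>i<k. c i * s i))"
    unfolding sum_distrib_left by (subst sum.swap) (simp add: mult_ac)
  also have "\<dots> = 0"
    using assms(2) by simp
  finally show ?thesis .
qed

definition indep_columns :: "nat \<Rightarrow> (nat \<Rightarrow> nat \<Rightarrow> 'a::field) \<Rightarrow> nat set \<Rightarrow> bool" where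
  "indep_columns r h B \<longleftrightarrow> (\<forall>x. (\<forall>i<r. (\<Sum>j\<in>B. h j i * x j) = 0) \<longrightarrow> (\<forall>j\<in>B. x j = 0))"

lemma indep_columns_empty: "indep_columns r h {}"
  by (simp add: indep_columns_def)

lemma sum_restrict_to_subset:
  fixes h x :: "'b \<Rightarrow> 'a::semiring_0"
  assumes "finite A" "B \<subseteq> A"
  shows "(\<Sum>j\<in>A. h j * (if j \<in> B then x j else 0)) = (\<Sum>j\<in>B. h j * x j)"
proof -
  have "(\<Sum>j\<in>A. h j * (if j \<in> B then x j else 0)) = (\<Sum>j\<in>A. if j \<in> B then h j * x j else 0)"
    by (intro sum.cong) auto
  also have "\<dots> = (\<Sum>j\<in>B. h j * x j)"
    using assms by (simp add: sum.inter_restrict[symmetric] Int_absorb1)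
  finally show ?thesis .
qed

lemma indep_columns_subset:
  assumes "indep_columns r h B" "B' \<subseteq> B" "finite B"
  shows "indep_columns r h B'"
  unfolding indep_columns_def
proof (intro allI impI ballI)
  fix x j
  assume rel: "\<forall>i<r. (\<Sum>j\<in>B'. h j i * x j) = 0" and "j \<in> B'"
  define y where "y j = (if j \<in> B' then x j else 0)" for j
  have "\<forall>i<r. (\<Sum>j\<in>B. h j i * y j) = 0"
    using rel assms(2,3) by (simp add: y_def sum_restrict_to_subset)
  then have "y j = 0"
    using assms(1,2) \<open>j \<in> B'\<close> unfolding indep_columns_def by blast
  then show "x j = 0"
    using \<open>j \<in> B'\<close> by (simp add: y_def)
qed

lemma gcol_in_fvec: "gcol k g j \<in> fvec k"
  unfolding gcol_def fvec_def by auto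

lemma sum_gcol: "(\<Sum>i<k. c i * gcol k g j i) = (\<Sum>i<k. c i * g i j)"
  unfolding gcol_def by (intro sum.cong) auto

lemma lin_comb_rows_in_code:
  assumes "is_generator_matrix k n g (code_of_pcm r n h)"
  shows "(\<lambda>j. \<Sum>i<k. c i * g i j) \<in> code_of_pcm r n h"
proof -
  have rows: "g i \<in> fvec n" "\<forall>l<r. (\<Sum>j<n. h j l * g i j) = 0" if "i < k" for i
    using assms that unfolding is_generator_matrix_def code_of_pcm_def by auto
  have "(\<Sum>j<n. h j l * (\<Sum>i<k. c i * g i j)) = (\<Sum>i<k. c i * (\<Sum>j<n. h j l * g i j))" for l
    unfolding sum_distrib_left by (subst sum.swap) (simp add: mult_ac)
  then show ?thesis
    using rows unfolding code_of_pcm_def fvec_def by simp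
qed

lemma indep_columns_complement_if_spans:
  assumes G: "is_generator_matrix k n g (code_of_pcm r n h)"
    and "A \<subseteq> {..<n}" and span: "spans k (gcol k g ` A)"
  shows "indep_columns r h ({..<n} - A)"
  unfolding indep_columns_def
proof (intro allI impI ballI)
  fix x j
  assume rel: "\<forall>i<r. (\<Sum>j\<in>{..<n} - A. h j i * x j) = 0" and j: "j \<in> {..<n} - A"
  define y where "y j = (if j \<in> {..<n} - A then x j else 0)" for j
  have "(\<Sum>j<n. h j i * y j) = (\<Sum>j\<in>{..<n} - A. h j i * x j)" for i
    unfolding y_def by (rule sum_restrict_to_subset) auto
  then have "y \<in> code_of_pcm r n h"
    using rel by (simp add: code_of_pcm_def fvec_def y_def)
  then obtain c where c: "y = (\<lambda>j. \<Sum>i<k. c i * g i j)"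
    using G unfolding is_generator_matrix_def by blast
  have "(\<Sum>i<k. c i * gcol k g a i) = 0" if "a \<in> A" for a
    using fun_cong[OF c, of a] that by (simp add: sum_gcol y_def)
  then have "\<forall>s\<in>gcol k g ` A. (\<Sum>i<k. c i * s i) = 0"
    by blast
  then have "\<forall>m<k. c m = 0"
    using orthogonal_to_spanning_eq_0[OF span] by blast
  then have "y j = 0"
    by (simp add: c)
  then show "x j = 0"
    using j by (simp add: y_def)
qed

lemma spans_if_indep_columns_complement:
  assumes G: "is_generator_matrix k n g (code_of_pcm r n h)"
    and A: "A \<subseteq> {..<n}" and indep: "indep_columns r h ({..<n} - A)"
  shows "spans k (gcol k g ` A)"
proof (rule ccontr)
  have "finite (gcol k g ` A)"
    using finite_subset[OF A] by simp
  then have "fvec k \<subseteq> lin_combs (gcol k g ` A) (\<lambda>s. s) \<or>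
             (\<exists>c. (\<exists>i<k. c i \<noteq> 0) \<and> (\<forall>s\<in>gcol k g ` A. (\<Sum>i<k. c i * s i) = 0))"
    using gcol_in_fvec by (intro spans_or_annihilator) auto
  moreover assume "\<not> spans k (gcol k g ` A)"
  ultimately obtain c where nz: "\<exists>i<k. c i \<noteq> 0" and orth: "\<forall>a\<in>A. (\<Sum>i<k. c i * g i a) = 0"
    by (auto simp: spans_iff_lin_combs sum_gcol)
  define x where "x j = (\<Sum>i<k. c i * g i j)" for j
  have x: "x \<in> code_of_pcm r n h"
    using lin_comb_rows_in_code[OF G] by (simp add: x_def[abs_def])
  have rel: "(\<Sum>j\<in>{..<n} - A. h j l * x j) = 0" if "l < r" for l
  proof -
    have "(\<Sum>j\<in>{..<n} - A. h j l * x j) = (\<Sum>j<n. h j l * x j)"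
      using orth by (intro sum.mono_neutral_left) (auto simp: x_def)
    then show ?thesis
      using x that by (simp add: code_of_pcm_def)
  qed
  have "\<forall>j\<in>{..<n} - A. x j = 0"
    using indep rel unfolding indep_columns_def by blast
  then have "x j = 0" for j
    using orth x unfolding code_of_pcm_def fvec_def
    by (cases "j < n"; cases "j \<in> A") (auto simp: x_def)
  then have "\<forall>i<k. c i = 0"
    using G unfolding is_generator_matrix_def x_def by blast
  then show False
    using nz by blast
qed

lemma spans_gcol_iff_indep_columns_complement:
  assumes "is_generator_matrix k n g (code_of_pcm r n h)" "A \<subseteq> {..<n}"
  shows "spans k (gcol k g ` A) \<longleftrightarrow> indep_columns r h ({..<n} - A)"
  using assms indep_columns_complement_if_spans spans_if_indep_columns_complement by blast

section \<open>Independent sets of columns of a Hamming matrix\<close>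

lemma bij_betw_fvec_PiE:
  "bij_betw (\<lambda>v. restrict v {..<r}) (fvec r) ({..<r} \<rightarrow>\<^sub>E (UNIV :: 'a::zero set))"
proof (rule bij_betwI[where g = "\<lambda>e i. if i < r then e i else 0"])
  show "(\<lambda>e i. if i < r then e i else 0) \<in> ({..<r} \<rightarrow>\<^sub>E (UNIV :: 'a set)) \<rightarrow> fvec r"
    by (auto simp: fvec_def)
  show "restrict (\<lambda>i. if i < r then e i else 0) {..<r} = e" if "e \<in> {..<r} \<rightarrow>\<^sub>E (UNIV :: 'a set)" for e
    using that by (auto simp: PiE_iff extensional_def restrict_def)
qed (auto simp: fvec_def)

lemma finite_fvec: "finite (fvec r :: (nat \<Rightarrow> 'a::{zero,finite}) set)"
proof -
  have "finite ({..<r} \<rightarrow>\<^sub>E (UNIV :: 'a set))"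
    by (intro finite_PiE) auto
  then show ?thesis
    using bij_betw_finite[OF bij_betw_fvec_PiE] by blast
qed

lemma card_fvec: "card (fvec r :: (nat \<Rightarrow> 'a::{zero,finite}) set) = CARD('a) ^ r"
  using bij_betw_same_card[OF bij_betw_fvec_PiE] by (simp add: card_PiE)

definition lin_indep_list :: "(nat \<Rightarrow> 'a::field) list \<Rightarrow> bool" where
  "lin_indep_list vs \<longleftrightarrow>
     (\<forall>c. (\<lambda>i. \<Sum>m<length vs. c m * (vs ! m) i) = (\<lambda>_. 0) \<longrightarrow> (\<forall>m<length vs. c m = 0))"

abbreviation list_span :: "(nat \<Rightarrow> 'a::field) list \<Rightarrow> (nat \<Rightarrow> 'a) set" where
  "list_span vs \<equiv> lin_combs {..<length vs} ((!) vs)"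

lemma list_span_subset_fvec: "set vs \<subseteq> fvec r \<Longrightarrow> list_span vs \<subseteq> fvec r"
  unfolding lin_combs_def fvec_def by (auto intro!: sum.neutral dest!: nth_mem)

lemma card_list_span:
  fixes vs :: "(nat \<Rightarrow> 'a::{field,finite}) list"
  assumes "lin_indep_list vs"
  shows "card (list_span vs) = CARD('a) ^ length vs"
proof -
  let ?comb = "\<lambda>c i. \<Sum>m<length vs. c m * (vs ! m) i"
  have "list_span vs = ?comb ` ({..<length vs} \<rightarrow>\<^sub>E UNIV)"
  proof (rule equalityI)
    show "list_span vs \<subseteq> ?comb ` ({..<length vs} \<rightarrow>\<^sub>E UNIV)"
    proof
      fix v assume "v \<in> list_span vs"
      then obtain c where "v = ?comb c"
        unfolding lin_combs_def by blast
      also have "\<dots> = ?comb (restrict c {..<length vs})"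
        by (intro ext sum.cong) auto
      finally show "v \<in> ?comb ` ({..<length vs} \<rightarrow>\<^sub>E UNIV)"
        by (intro rev_image_eqI[of "restrict c {..<length vs}"]) auto
    qed
  qed (unfold lin_combs_def, blast)
  moreover have "inj_on ?comb ({..<length vs} \<rightarrow>\<^sub>E UNIV)"
  proof (rule inj_onI)
    fix c d :: "nat \<Rightarrow> 'a"
    assume cd: "c \<in> {..<length vs} \<rightarrow>\<^sub>E UNIV" "d \<in> {..<length vs} \<rightarrow>\<^sub>E UNIV" and "?comb c = ?comb d"
    then have "?comb (\<lambda>m. c m - d m) = (\<lambda>_. 0)"
      by (simp add: fun_eq_iff left_diff_distrib sum_subtractf)
    then have "\<forall>m<length vs. c m - d m = 0"
      using assms[unfolded lin_indep_list_def, rule_format, of "\<lambda>m. c m - d m"] by simp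
    then show "c = d"
      using cd by (intro PiE_ext) auto
  qed
  ultimately show ?thesis
    by (simp add: card_image card_PiE)
qed

lemma sum_nth_snoc:
  "(\<Sum>m<length (vs @ [v]). c m * ((vs @ [v]) ! m) i) =
   (\<Sum>m<length vs. c m * (vs ! m) i) + c (length vs) * v i"
  by (auto simp: nth_append intro!: sum.cong)

lemma sum_nth_snoc_upd:
  "(\<Sum>m<length (vs @ [v]). (c(length vs := a)) m * ((vs @ [v]) ! m) i) =
   (\<Sum>m<length vs. c m * (vs ! m) i) + a * v i"
  unfolding sum_nth_snoc by (auto intro!: sum.cong)

lemma lin_indep_list_butlast:
  assumes indep: "lin_indep_list (vs @ [v])"
  shows "lin_indep_list vs"
  unfolding lin_indep_list_def
proof (intro allI impI)
  fix c m
  assume "(\<lambda>i. \<Sum>m<length vs. c m * (vs ! m) i) = (\<lambda>_. 0)" and m: "m < length vs"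
  then have "(\<lambda>i. \<Sum>m<length (vs @ [v]). (c(length vs := 0)) m * ((vs @ [v]) ! m) i) = (\<lambda>_. 0)"
    unfolding sum_nth_snoc_upd by (simp add: fun_eq_iff)
  then have "\<forall>m<length (vs @ [v]). (c(length vs := 0)) m = 0"
    using indep unfolding lin_indep_list_def by blast
  then show "c m = 0"
    using m by (auto dest: spec[of _ m])
qed

lemma lin_indep_list_snoc_not_in_span:
  assumes indep: "lin_indep_list (vs @ [v])"
  shows "v \<notin> list_span vs"
proof
  assume "v \<in> list_span vs"
  then obtain d where "v = (\<lambda>i. \<Sum>m<length vs. d m * (vs ! m) i)"
    unfolding lin_combs_def by blast
  then have "(\<lambda>i. \<Sum>m<length (vs @ [v]). (d(length vs := -1)) m * ((vs @ [v]) ! m) i) = (\<lambda>_. 0)"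
    unfolding sum_nth_snoc_upd by simp
  then have "\<forall>m<length (vs @ [v]). (d(length vs := -1)) m = 0"
    using indep unfolding lin_indep_list_def by blast
  then show False
    by (auto dest: spec[of _ "length vs"])
qed

lemma in_list_span_if_snoc_relation:
  assumes rel: "(\<lambda>i. \<Sum>m<length (vs @ [v]). c m * ((vs @ [v]) ! m) i) = (\<lambda>_. 0)"
    and nz: "c (length vs) \<noteq> 0"
  shows "v \<in> list_span vs"
proof -
  have "v = (\<lambda>i. \<Sum>m<length vs. (- c m / c (length vs)) * (vs ! m) i)"
  proof
    fix i
    have "(\<Sum>m<length vs. c m * (vs ! m) i) + c (length vs) * v i = 0"
      using fun_cong[OF rel, of i] unfolding sum_nth_snoc .
    then have "c (length vs) * v i = - (\<Sum>m<length vs. c m * (vs ! m) i)"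
      by (simp add: eq_neg_iff_add_eq_0 add.commute)
    then have "v i = - (\<Sum>m<length vs. c m * (vs ! m) i) / c (length vs)"
      using nz by (simp add: field_simps)
    then show "v i = (\<Sum>m<length vs. (- c m / c (length vs)) * (vs ! m) i)"
      by (simp add: sum_divide_distrib[symmetric] sum_negf)
  qed
  then show ?thesis
    unfolding lin_combs_def by (intro CollectI exI[of _ "\<lambda>m. - c m / c (length vs)"]) simp
qed

lemma lin_indep_list_snocI:
  assumes indep: "lin_indep_list vs" and notin: "v \<notin> list_span vs"
  shows "lin_indep_list (vs @ [v])"
  unfolding lin_indep_list_def
proof (rule allI, rule impI)
  fix c assume rel: "(\<lambda>i. \<Sum>m<length (vs @ [v]). c m * ((vs @ [v]) ! m) i) = (\<lambda>_. 0)"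
  then have last: "c (length vs) = 0"
    using in_list_span_if_snoc_relation notin by blast
  then have "\<forall>m<length vs. c m = 0"
    using rel indep unfolding sum_nth_snoc lin_indep_list_def by simp
  then show "\<forall>m<length (vs @ [v]). c m = 0"
    using last by (simp add: less_Suc_eq)
qed

lemma lin_indep_list_snoc:
  "lin_indep_list (vs @ [v]) \<longleftrightarrow> lin_indep_list vs \<and> v \<notin> list_span vs"
  using lin_indep_list_butlast lin_indep_list_snoc_not_in_span lin_indep_list_snocI by blast

lemma lin_indep_list_nth_nonzero:
  fixes vs :: "(nat \<Rightarrow> 'a::field) list"
  assumes "lin_indep_list vs" "m < length vs"
  shows "vs ! m \<noteq> (\<lambda>_. 0)"
proof
  assume "vs ! m = (\<lambda>_. 0)"
  then have "(\<lambda>i. \<Sum>k<length vs. of_bool (k = m) * (vs ! k) i) = (\<lambda>_. 0)"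
    using assms(2) by (simp add: fun_eq_iff)
  then have "of_bool (m = m) = (0 :: 'a)"
    using assms(1)[unfolded lin_indep_list_def, rule_format, of "\<lambda>k. of_bool (k = m)"] assms(2)
    by blast
  then show False
    by simp
qed

lemma lin_indep_list_nth_not_parallel:
  assumes "lin_indep_list vs" "m1 < length vs" "m2 < length vs" "m1 \<noteq> m2" "c1 \<noteq> 0"
    and "vs ! m1 = (\<lambda>i. c1 * w i)" "vs ! m2 = (\<lambda>i. c2 * w i)"
  shows False
proof -
  let ?a = "\<lambda>m. of_bool (m = m2) * c1 - of_bool (m = m1) * c2"
  have "(\<lambda>i. \<Sum>m<length vs. ?a m * (vs ! m) i) = (\<lambda>i. c1 * (vs ! m2) i - c2 * (vs ! m1) i)"
    using assms(2,3) by (simp add: fun_eq_iff left_diff_distrib sum_subtractf mult.assoc)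
  also have "\<dots> = (\<lambda>_. 0)"
    using assms(6,7) by (simp add: fun_eq_iff)
  finally have "?a m2 = 0"
    using assms(1)[unfolded lin_indep_list_def, rule_format, of ?a] assms(3) by blast
  then show False
    using assms(4,5) by simp
qed

definition indep_lists :: "nat \<Rightarrow> nat \<Rightarrow> (nat \<Rightarrow> 'a::field) list set" where
  "indep_lists r l = {vs. length vs = l \<and> set vs \<subseteq> fvec r \<and> lin_indep_list vs}"

lemma indep_lists_Suc:
  "indep_lists r (Suc l) =
   (\<lambda>(vs, v). vs @ [v]) ` Sigma (indep_lists r l) (\<lambda>vs. fvec r - list_span vs)"
proof (intro equalityI subsetI)
  fix ws assume ws: "ws \<in> indep_lists r (Suc l)"
  then obtain vs v where "ws = vs @ [v]" "length vs = l"
    unfolding indep_lists_def by (metis (mono_tags) mem_Collect_eq length_Suc_conv_rev)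
  with ws show "ws \<in> (\<lambda>(vs, v). vs @ [v]) ` Sigma (indep_lists r l) (\<lambda>vs. fvec r - list_span vs)"
    by (force simp: indep_lists_def lin_indep_list_snoc)
qed (auto simp: indep_lists_def lin_indep_list_snoc)

lemma card_indep_lists:
  "card (indep_lists r l :: (nat \<Rightarrow> 'a::{field,finite}) list set) = (\<Prod>i<l. CARD('a) ^ r - CARD('a) ^ i)"
proof (induction l)
  case 0
  have "indep_lists r 0 = {[] :: (nat \<Rightarrow> 'a) list}"
    by (auto simp: indep_lists_def lin_indep_list_def)
  then show ?case
    by simp
next
  case (Suc l)
  let ?I = "indep_lists r l :: (nat \<Rightarrow> 'a) list set"
  have fin: "finite ?I"
    by (rule finite_subset[OF _ finite_lists_length_eq[OF finite_fvec, where n = l]]) (auto simp: indep_lists_def)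
  have "inj_on (\<lambda>(vs, v). vs @ [v]) (Sigma ?I (\<lambda>vs. fvec r - list_span vs))"
    by (auto simp: inj_on_def)
  then have "card (indep_lists r (Suc l) :: (nat \<Rightarrow> 'a) list set) =
             card (Sigma ?I (\<lambda>vs. fvec r - list_span vs))"
    unfolding indep_lists_Suc by (rule card_image)
  also have "\<dots> = (\<Sum>vs\<in>?I. card (fvec r - list_span vs))"
    using fin by (simp add: card_SigmaI finite_fvec)
  also have "\<dots> = (\<Sum>vs\<in>?I. CARD('a) ^ r - CARD('a) ^ l)"
  proof (rule sum.cong[OF refl])
    fix vs assume "vs \<in> ?I"
    then have sub: "list_span vs \<subseteq> fvec r" and "card (list_span vs) = CARD('a) ^ l"
      using list_span_subset_fvec card_list_span unfolding indep_lists_def by auto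
    then show "card (fvec r - list_span vs) = CARD('a) ^ r - CARD('a) ^ l"
      using card_Diff_subset[OF finite_subset[OF sub finite_fvec] sub] by (simp add: card_fvec)
  qed
  finally show ?case
    using Suc.IH by simp
qed

lemma sum_set_distinct:
  assumes "distinct js"
  shows "(\<Sum>j\<in>set js. F j) = (\<Sum>m<length js. F (js ! m))"
proof -
  have "set js = (!) js ` {..<length js}"
    by (auto simp: set_conv_nth)
  moreover have "inj_on ((!) js) {..<length js}"
    using inj_on_nth[OF assms] by simp
  ultimately show ?thesis
    by (simp add: sum.reindex)
qed

lemma indep_columns_set_iff:
  fixes h :: "nat \<Rightarrow> nat \<Rightarrow> 'a::field"
  assumes "distinct js"
  shows "indep_columns r h (set js) \<longleftrightarrow>
         (\<forall>a. (\<forall>i<r. (\<Sum>m<length js. a m * h (js ! m) i) = 0) \<longrightarrow> (\<forall>m<length js. a m = 0))"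
proof
  assume indep: "indep_columns r h (set js)"
  show "\<forall>a. (\<forall>i<r. (\<Sum>m<length js. a m * h (js ! m) i) = 0) \<longrightarrow> (\<forall>m<length js. a m = 0)"
  proof (intro allI impI)
    fix a m
    assume rel: "\<forall>i<r. (\<Sum>m<length js. a m * h (js ! m) i) = 0" and m: "m < length js"
    define x where "x j = a (the_inv_into {..<length js} ((!) js) j)" for j
    have x: "x (js ! m) = a m" if "m < length js" for m
      using the_inv_into_f_f[OF inj_on_nth[OF assms]] that by (simp add: x_def)
    have "\<forall>i<r. (\<Sum>j\<in>set js. h j i * x j) = 0"
      using rel by (simp add: sum_set_distinct[OF assms] x mult.commute)
    then have "x (js ! m) = 0"
      using indep m unfolding indep_columns_def by simp
    then show "a m = 0"
      using x[OF m] by simp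
  qed
next
  assume indep: "\<forall>a. (\<forall>i<r. (\<Sum>m<length js. a m * h (js ! m) i) = 0) \<longrightarrow> (\<forall>m<length js. a m = 0)"
  show "indep_columns r h (set js)"
    unfolding indep_columns_def
  proof (intro allI impI ballI)
    fix x j
    assume "\<forall>i<r. (\<Sum>j\<in>set js. h j i * x j) = 0" and "j \<in> set js"
    then have "\<forall>m<length js. x (js ! m) = 0"
      using indep[rule_format, of "\<lambda>m. x (js ! m)"] by (simp add: sum_set_distinct[OF assms] mult.commute)
    then show "x j = 0"
      using \<open>j \<in> set js\<close> by (metis in_set_conv_nth)
  qed
qed

definition scaled_columns :: "(nat \<Rightarrow> nat \<Rightarrow> 'a::field) \<Rightarrow> nat list \<Rightarrow> 'a list \<Rightarrow> (nat \<Rightarrow> 'a) list" where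
  "scaled_columns h js cs = map (\<lambda>m i. cs ! m * h (js ! m) i) [0..<length js]"

lemma length_scaled_columns [simp]: "length (scaled_columns h js cs) = length js"
  by (simp add: scaled_columns_def)

lemma nth_scaled_columns [simp]: "m < length js \<Longrightarrow> scaled_columns h js cs ! m = (\<lambda>i. cs ! m * h (js ! m) i)"
  by (simp add: scaled_columns_def)

lemma lin_indep_scaled_columns_iff_relations:
  fixes h :: "nat \<Rightarrow> nat \<Rightarrow> 'a::field"
  assumes cols: "\<forall>j\<in>set js. h j \<in> fvec r"
  shows "lin_indep_list (scaled_columns h js cs) \<longleftrightarrow>
         (\<forall>a. (\<forall>i<r. (\<Sum>m<length js. (a m * cs ! m) * h (js ! m) i) = 0) \<longrightarrow>
              (\<forall>m<length js. a m = 0))"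
proof -
  let ?l = "length js"
  have "h (js ! m) i = 0" if "m < ?l" "r \<le> i" for m i
    using cols nth_mem[of m js] that unfolding fvec_def by blast
  then have high: "(\<Sum>m<?l. b m * h (js ! m) i) = 0" if "r \<le> i" for b i
    using that by simp
  have vanish: "(\<lambda>i. \<Sum>m<?l. b m * h (js ! m) i) = (\<lambda>_. 0) \<longleftrightarrow>
                (\<forall>i<r. (\<Sum>m<?l. b m * h (js ! m) i) = 0)" for b
  proof
    assume low: "\<forall>i<r. (\<Sum>m<?l. b m * h (js ! m) i) = 0"
    show "(\<lambda>i. \<Sum>m<?l. b m * h (js ! m) i) = (\<lambda>_. 0)"
    proof
      fix i
      show "(\<Sum>m<?l. b m * h (js ! m) i) = 0"
        using low high[of i b] by (cases "i < r") auto
    qed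
  qed (simp add: fun_eq_iff)
  have comb: "(\<lambda>i. \<Sum>m<?l. a m * (scaled_columns h js cs ! m) i) =
              (\<lambda>i. \<Sum>m<?l. (a m * cs ! m) * h (js ! m) i)" for a
    by (auto simp: mult.assoc intro!: sum.cong)
  show ?thesis
    unfolding lin_indep_list_def length_scaled_columns comb vanish by (rule refl)
qed

lemma trivial_relations_rescale_iff:
  fixes u :: "nat \<Rightarrow> nat \<Rightarrow> 'a::field"
  assumes nz: "\<forall>m<l. d m \<noteq> 0"
  shows "(\<forall>a. (\<forall>i<r. (\<Sum>m<l. (a m * d m) * u m i) = 0) \<longrightarrow> (\<forall>m<l. a m = 0)) \<longleftrightarrow>
         (\<forall>b. (\<forall>i<r. (\<Sum>m<l. b m * u m i) = 0) \<longrightarrow> (\<forall>m<l. b m = 0))"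
proof safe
  fix b m
  assume indep: "\<forall>a. (\<forall>i<r. (\<Sum>m<l. (a m * d m) * u m i) = 0) \<longrightarrow> (\<forall>m<l. a m = 0)"
    and rel: "\<forall>i<r. (\<Sum>m<l. b m * u m i) = 0" and m: "m < l"
  have "(\<Sum>m<l. (b m / d m * d m) * u m i) = (\<Sum>m<l. b m * u m i)" for i
    using nz by (intro sum.cong) auto
  then have "b m / d m = 0"
    using indep[rule_format, of "\<lambda>m. b m / d m", OF _ m] rel by presburger
  then show "b m = 0"
    using nz m by simp
next
  fix a m
  assume indep: "\<forall>b. (\<forall>i<r. (\<Sum>m<l. b m * u m i) = 0) \<longrightarrow> (\<forall>m<l. b m = 0)"
    and rel: "\<forall>i<r. (\<Sum>m<l. (a m * d m) * u m i) = 0" and m: "m < l"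
  have "a m * d m = 0"
    using indep[rule_format, of "\<lambda>m. a m * d m", OF rel[rule_format] m] .
  then show "a m = 0"
    using nz m by simp
qed

lemma lin_indep_scaled_columns_iff:
  fixes h :: "nat \<Rightarrow> nat \<Rightarrow> 'a::field"
  assumes js: "distinct js" and cs: "length cs = length js" "0 \<notin> set cs"
    and cols: "\<forall>j\<in>set js. h j \<in> fvec r"
  shows "lin_indep_list (scaled_columns h js cs) \<longleftrightarrow> indep_columns r h (set js)"
proof -
  have "\<forall>m<length js. cs ! m \<noteq> 0"
    using cs by (metis nth_mem)
  then have "lin_indep_list (scaled_columns h js cs) \<longleftrightarrow>
             (\<forall>b. (\<forall>i<r. (\<Sum>m<length js. b m * h (js ! m) i) = 0) \<longrightarrow> (\<forall>m<length js. b m = 0))"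
    unfolding lin_indep_scaled_columns_iff_relations[OF cols]
    by (rule trivial_relations_rescale_iff)
  also have "\<dots> \<longleftrightarrow> indep_columns r h (set js)"
    by (rule indep_columns_set_iff[OF js, symmetric])
  finally show ?thesis .
qed

lemma hamming_columns_in_fvec:
  "hamming_pcm r n h \<Longrightarrow> j < n \<Longrightarrow> h j \<in> fvec r"
  unfolding hamming_pcm_def by blast

lemma hamming_multiple_unique:
  fixes h :: "nat \<Rightarrow> nat \<Rightarrow> 'a::field"
  assumes H: "hamming_pcm r n h" and "j < n" "j' < n" "c \<noteq> 0" "c' \<noteq> 0"
    and eq: "(\<lambda>i. c * h j i) = (\<lambda>i. c' * h j' i)"
  shows "j = j' \<and> c = c'"
proof -
  obtain i0 where i0: "h j i0 \<noteq> 0"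
    using H \<open>j < n\<close> unfolding hamming_pcm_def by (metis ext)
  have "(\<lambda>i. c * h j i) \<in> fvec r" "(\<lambda>i. c * h j i) \<noteq> (\<lambda>_. 0)"
    using hamming_columns_in_fvec[OF H \<open>j < n\<close>] i0 \<open>c \<noteq> 0\<close> by (auto simp: fvec_def fun_eq_iff)
  then have "\<exists>!j''. j'' < n \<and> (\<exists>d. d \<noteq> 0 \<and> (\<lambda>i. c * h j i) = (\<lambda>i. d * h j'' i))"
    using H unfolding hamming_pcm_def by blast
  then have "j = j'"
    using assms(2-5) eq by blast
  moreover from this have "c * h j i0 = c' * h j i0"
    using fun_cong[OF eq, of i0] by simp
  ultimately show ?thesis
    using i0 by simp
qed

definition indep_index_lists :: "nat \<Rightarrow> nat \<Rightarrow> (nat \<Rightarrow> nat \<Rightarrow> 'a::field) \<Rightarrow> nat \<Rightarrow> nat list set" where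
  "indep_index_lists r n h l =
     {js. length js = l \<and> distinct js \<and> set js \<subseteq> {..<n} \<and> indep_columns r h (set js)}"

definition nonzero_lists :: "nat \<Rightarrow> 'a::zero list set" where
  "nonzero_lists l = {cs. length cs = l \<and> 0 \<notin> set cs}"

lemma scaled_columns_in_indep_lists:
  assumes H: "hamming_pcm r n h" and js: "js \<in> indep_index_lists r n h l" and cs: "cs \<in> nonzero_lists l"
  shows "scaled_columns h js cs \<in> indep_lists r l"
proof -
  have cols: "\<forall>j\<in>set js. h j \<in> fvec r"
    using js hamming_columns_in_fvec[OF H] by (auto simp: indep_index_lists_def)
  have "set (scaled_columns h js cs) \<subseteq> fvec r"
  proof
    fix v assume "v \<in> set (scaled_columns h js cs)"
    then obtain m where m: "m < length js" "v = (\<lambda>i. cs ! m * h (js ! m) i)"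
      by (auto simp: in_set_conv_nth)
    then have "h (js ! m) \<in> fvec r"
      using cols nth_mem by blast
    then show "v \<in> fvec r"
      using m by (simp add: fvec_def)
  qed
  moreover have "lin_indep_list (scaled_columns h js cs)"
    using lin_indep_scaled_columns_iff[of js cs h r] cols js cs
    by (simp add: indep_index_lists_def nonzero_lists_def)
  ultimately show ?thesis
    using js by (simp add: indep_lists_def indep_index_lists_def)
qed

lemma inj_on_scaled_columns:
  assumes H: "hamming_pcm r n h"
  shows "inj_on (\<lambda>(js, cs). scaled_columns h js cs) (indep_index_lists r n h l \<times> nonzero_lists l)"
proof (rule inj_onI, clarify)
  fix js cs js' cs'
  assume js: "js \<in> indep_index_lists r n h l" "js' \<in> indep_index_lists r n h l"
    and cs: "cs \<in> nonzero_lists l" "cs' \<in> nonzero_lists l"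
    and eq: "scaled_columns h js cs = scaled_columns h js' cs'"
  have len: "length js = l" "length js' = l" "length cs = l" "length cs' = l"
    using js cs by (auto simp: indep_index_lists_def nonzero_lists_def)
  have "js ! m = js' ! m \<and> cs ! m = cs' ! m" if "m < l" for m
  proof (rule hamming_multiple_unique[OF H])
    have "js ! m \<in> set js" "js' ! m \<in> set js'" "cs ! m \<in> set cs" "cs' ! m \<in> set cs'"
      using that len by simp_all
    then show "js ! m < n" "js' ! m < n" "cs ! m \<noteq> 0" "cs' ! m \<noteq> 0"
      using js cs by (auto simp: indep_index_lists_def nonzero_lists_def)
    show "(\<lambda>i. cs ! m * h (js ! m) i) = (\<lambda>i. cs' ! m * h (js' ! m) i)"
      using arg_cong[OF eq, of "\<lambda>vs. vs ! m"] that len by simp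
  qed
  then show "js = js' \<and> cs = cs'"
    using len by (auto intro: nth_equalityI)
qed

lemma hamming_nonzero_eq_scaled_column:
  assumes "hamming_pcm r n h" "v \<in> fvec r" "v \<noteq> (\<lambda>_. 0)"
  shows "\<exists>p. fst p < n \<and> snd p \<noteq> 0 \<and> v = (\<lambda>i. snd p * h (fst p) i)"
proof -
  obtain j c where "j < n" "c \<noteq> 0" "v = (\<lambda>i. c * h j i)"
    using assms unfolding hamming_pcm_def by blast
  then show ?thesis
    by (intro exI[of _ "(j, c)"]) simp
qed

lemma indep_list_eq_scaled_columns:
  fixes h :: "nat \<Rightarrow> nat \<Rightarrow> 'a::field"
  assumes H: "hamming_pcm r n h" and vs: "vs \<in> indep_lists r l"
  shows "\<exists>js\<in>indep_index_lists r n h l. \<exists>cs\<in>nonzero_lists l. vs = scaled_columns h js cs"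
proof -
  have len: "length vs = l" and sub: "set vs \<subseteq> fvec r" and indep: "lin_indep_list vs"
    using vs by (auto simp: indep_lists_def)
  have "\<exists>p. fst p < n \<and> snd p \<noteq> 0 \<and> vs ! m = (\<lambda>i. snd p * h (fst p) i)" if "m < l" for m
  proof (rule hamming_nonzero_eq_scaled_column[OF H])
    show "vs ! m \<in> fvec r" "vs ! m \<noteq> (\<lambda>_. 0)"
      using sub len that nth_mem lin_indep_list_nth_nonzero[OF indep] by auto
  qed
  then obtain p where p: "\<And>m. m < l \<Longrightarrow> fst (p m) < n \<and> snd (p m) \<noteq> 0 \<and>
                                         vs ! m = (\<lambda>i. snd (p m) * h (fst (p m)) i)"
    by metis
  define js where "js = map (fst \<circ> p) [0..<l]"
  define cs where "cs = map (snd \<circ> p) [0..<l]"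
  have js_cs: "length js = l" "length cs = l" "\<And>m. m < l \<Longrightarrow> js ! m = fst (p m) \<and> cs ! m = snd (p m)"
    by (simp_all add: js_def cs_def)
  have scaled: "vs = scaled_columns h js cs"
    by (rule nth_equalityI) (simp_all add: len js_cs p)
  have "distinct js"
    unfolding distinct_conv_nth
  proof (intro allI impI notI)
    fix m1 m2
    assume "m1 < length js" "m2 < length js" "m1 \<noteq> m2" "js ! m1 = js ! m2"
    then show False
      using lin_indep_list_nth_not_parallel[OF indep, of m1 m2 "snd (p m1)" "h (fst (p m1))" "snd (p m2)"]
        js_cs p len by simp
  qed
  moreover have "0 \<notin> set cs"
    using p by (auto simp: cs_def)
  moreover have "set js \<subseteq> {..<n}"
    using p by (auto simp: js_def)
  moreover have "\<forall>j\<in>set js. h j \<in> fvec r"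
    using \<open>set js \<subseteq> {..<n}\<close> hamming_columns_in_fvec[OF H] by auto
  ultimately have "indep_columns r h (set js)"
    using lin_indep_scaled_columns_iff[of js cs h r] indep js_cs scaled by simp
  then show ?thesis
    using \<open>distinct js\<close> \<open>0 \<notin> set cs\<close> \<open>set js \<subseteq> {..<n}\<close> js_cs scaled
    by (auto simp: indep_index_lists_def nonzero_lists_def)
qed

lemma bij_betw_scaled_columns:
  fixes h :: "nat \<Rightarrow> nat \<Rightarrow> 'a::field"
  assumes "hamming_pcm r n h"
  shows "bij_betw (\<lambda>(js, cs). scaled_columns h js cs)
           (indep_index_lists r n h l \<times> nonzero_lists l) (indep_lists r l)"
proof -
  have "(\<lambda>(js, cs). scaled_columns h js cs) ` (indep_index_lists r n h l \<times> nonzero_lists l) =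
        indep_lists r l"
  proof (intro equalityI subsetI)
    fix vs :: "(nat \<Rightarrow> 'a) list"
    assume "vs \<in> indep_lists r l"
    then obtain js cs where "js \<in> indep_index_lists r n h l" "cs \<in> nonzero_lists l"
      "vs = scaled_columns h js cs"
      using indep_list_eq_scaled_columns[OF assms] by blast
    then show "vs \<in> (\<lambda>(js, cs). scaled_columns h js cs) ` (indep_index_lists r n h l \<times> nonzero_lists l)"
      by force
  qed (auto simp: scaled_columns_in_indep_lists[OF assms])
  then show ?thesis
    using inj_on_scaled_columns[OF assms] unfolding bij_betw_def by blast
qed

lemma card_nonzero_lists: "card (nonzero_lists l :: 'a::{zero,finite} list set) = (CARD('a) - 1) ^ l"
proof -
  have "nonzero_lists l = {cs. set cs \<subseteq> UNIV - {0 :: 'a} \<and> length cs = l}"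
    by (auto simp: nonzero_lists_def)
  then show ?thesis
    by (simp add: card_lists_length_eq card_Diff_singleton)
qed

lemma card_indep_index_lists:
  "card (indep_index_lists r n h l) =
   card {B. B \<subseteq> {..<n} \<and> card B = l \<and> indep_columns r h B} * fact l"
proof -
  let ?I = "{B. B \<subseteq> {..<n} \<and> card B = l \<and> indep_columns r h B}"
  have "indep_index_lists r n h l = (\<Union>B\<in>?I. permutations_of_set B)"
    by (auto simp: indep_index_lists_def permutations_of_set_def distinct_card)
  then have "card (indep_index_lists r n h l) = card (\<Union>B\<in>?I. permutations_of_set B)"
    by simp
  also have "\<dots> = (\<Sum>B\<in>?I. card (permutations_of_set B))"
  proof (rule card_UN_disjoint)
    show "finite ?I"
      by (rule finite_subset[of _ "Pow {..<n}"]) auto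
    show "\<forall>B\<in>?I. finite (permutations_of_set B)"
      by simp
  qed (auto simp: permutations_of_set_def)
  also have "\<dots> = (\<Sum>B\<in>?I. fact l)"
    by (intro sum.cong refl) (auto simp: finite_subset[of _ "{..<n}"])
  finally show ?thesis
    by simp
qed

lemma card_indep_column_sets_mult:
  fixes h :: "nat \<Rightarrow> nat \<Rightarrow> 'a::{field,finite}"
  assumes "hamming_pcm r n h"
  shows "card {B. B \<subseteq> {..<n} \<and> card B = l \<and> indep_columns r h B} * fact l * (CARD('a) - 1) ^ l =
         (\<Prod>i<l. CARD('a) ^ r - CARD('a) ^ i)"
  using bij_betw_same_card[OF bij_betw_scaled_columns[OF assms, of l]] card_indep_lists[of r l, where 'a = 'a]
  by (simp add: card_cartesian_product card_indep_index_lists card_nonzero_lists)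

lemma card_field_ge_2: "CARD('a::{finite,field}) \<ge> 2"
proof -
  have "card {0 :: 'a, 1} = 2"
    by simp
  moreover have "card {0 :: 'a, 1} \<le> CARD('a)"
    by (rule card_mono) auto
  ultimately show ?thesis
    by simp
qed

lemma of_nat_prod_power_diff:
  assumes "q \<ge> 1"
  shows "real (\<Prod>i<l. q ^ r - q ^ i) = (\<Prod>i<l. real q ^ r - real q ^ i)"
proof (cases "l \<le> r")
  case True
  then have "real (q ^ r - q ^ i) = real q ^ r - real q ^ i" if "i < l" for i
    using that assms by (simp add: of_nat_diff power_increasing)
  then show ?thesis
    by (simp add: of_nat_prod)
next
  case False
  then have "(\<Prod>i<l. q ^ r - q ^ i) = 0" "(\<Prod>i<l. real q ^ r - real q ^ i) = 0"
    by (intro prod_zero bexI[of _ r]; simp)+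
  then show ?thesis
    by (simp only: of_nat_0)
qed

lemma card_indep_column_sets:
  fixes h :: "nat \<Rightarrow> nat \<Rightarrow> 'a::{finite,field}"
  assumes "hamming_pcm r n h"
  shows "real (card {B. B \<subseteq> {..<n} \<and> card B = l \<and> indep_columns r h B}) =
         1 / fact l * (\<Prod>i<l. (real CARD('a) ^ r - real CARD('a) ^ i) / (real CARD('a) - 1))"
proof -
  let ?q = "CARD('a)" and ?I = "card {B. B \<subseteq> {..<n} \<and> card B = l \<and> indep_columns r h B}"
  have q: "?q \<ge> 2"
    by (rule card_field_ge_2)
  have "real ?I * fact l * (real ?q - 1) ^ l = real (?I * fact l * (?q - 1) ^ l)"
    using q by (simp add: of_nat_diff)
  also have "\<dots> = real (\<Prod>i<l. ?q ^ r - ?q ^ i)"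
    by (simp only: card_indep_column_sets_mult[OF assms])
  also have "\<dots> = (\<Prod>i<l. real ?q ^ r - real ?q ^ i)"
    using q by (intro of_nat_prod_power_diff) simp
  finally show ?thesis
    using q by (simp add: prod_dividef field_simps)
qed

section \<open>The expected number of draws\<close>

lemma sums_stop_prob:
  fixes g h :: "nat \<Rightarrow> nat \<Rightarrow> 'a::field"
  assumes G: "is_generator_matrix k n g (code_of_pcm r n h)" and "n > 0"
  shows "(\<lambda>t. real t * stop_prob k n g t) sums
           (\<Sum>B | B \<subseteq> {..<n} \<and> \<not> indep_columns r h B. 1 / real ((n - 1) choose (n - card B)))"
proof -
  define P where "P A \<longleftrightarrow> spans k (gcol k g ` A)" for A
  have P: "P A \<longleftrightarrow> indep_columns r h ({..<n} - A)" if "A \<subseteq> {..<n}" for A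
    unfolding P_def by (rule spans_gcol_iff_indep_columns_complement[OF G that])
  have mono: "P B" if "A \<subseteq> B" "B \<subseteq> {..<n}" "P A" for A B
    using that P[of A] P[of B] indep_columns_subset[of r h "{..<n} - A" "{..<n} - B"] by auto
  have "P {..<n}"
    using P[of "{..<n}"] indep_columns_empty by simp
  then have "(\<lambda>t. real t * stop_prob k n g t) sums
               (\<Sum>A | A \<subseteq> {..<n} \<and> \<not> P A. 1 / real ((n - 1) choose card A))"
    using expected_first_hitting_time[of n P, OF \<open>n > 0\<close> mono]
    unfolding stop_prob_def P_def by (simp add: image_image)
  also have "(\<Sum>A | A \<subseteq> {..<n} \<and> \<not> P A. 1 / real ((n - 1) choose card A)) =
             (\<Sum>A | A \<subseteq> {..<n} \<and> \<not> indep_columns r h ({..<n} - A). 1 / real ((n - 1) choose card A))"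
    by (intro sum.cong) (auto simp: P)
  also have "\<dots> = (\<Sum>B | B \<subseteq> {..<n} \<and> \<not> indep_columns r h B. 1 / real ((n - 1) choose (n - card B)))"
  proof (rule sum.reindex_bij_witness[of _ "\<lambda>B. {..<n} - B" "\<lambda>A. {..<n} - A"])
    fix A assume "A \<in> {A. A \<subseteq> {..<n} \<and> \<not> indep_columns r h ({..<n} - A)}"
    then have "A \<subseteq> {..<n}"
      by blast
    then have "card ({..<n} - A) = n - card A" "card A \<le> n"
      using card_mono[of "{..<n}" A] by (simp_all add: card_Diff_subset finite_subset)
    then show "1 / real ((n - 1) choose (n - card ({..<n} - A))) = 1 / real ((n - 1) choose card A)"
      by simp
  qed (auto simp: double_diff)
  finally show ?thesis .
qed

lemma sum_nonempty_subsets_by_card: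
  fixes f :: "nat \<Rightarrow> real"
  shows "(\<Sum>B | B \<subseteq> {..<n} \<and> B \<noteq> {} \<and> Q B. f (card B)) =
         (\<Sum>l=1..n. real (card {B. B \<subseteq> {..<n} \<and> card B = l \<and> Q B}) * f l)"
proof -
  let ?S = "{B. B \<subseteq> {..<n} \<and> B \<noteq> {} \<and> Q B}"
  have "card ` ?S \<subseteq> {1..n}"
    using card_mono[of "{..<n}"] by (auto simp: Suc_le_eq card_gt_0_iff finite_subset)
  then have "(\<Sum>B\<in>?S. f (card B)) = (\<Sum>l=1..n. \<Sum>B | B \<in> ?S \<and> card B = l. f (card B))"
    by (intro sum.group[symmetric]) (auto intro: finite_subset[of _ "Pow {..<n}"])
  also have "\<dots> = (\<Sum>l=1..n. real (card {B. B \<subseteq> {..<n} \<and> card B = l \<and> Q B}) * f l)"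
  proof (rule sum.cong[OF refl])
    fix l :: nat assume "l \<in> {1..n}"
    then have "{B. B \<in> ?S \<and> card B = l} = {B. B \<subseteq> {..<n} \<and> card B = l \<and> Q B}"
      by auto
    then show "(\<Sum>B | B \<in> ?S \<and> card B = l. f (card B)) =
               real (card {B. B \<subseteq> {..<n} \<and> card B = l \<and> Q B}) * f l"
      by simp
  qed
  finally show ?thesis .
qed

lemma sum_dependent_subsets:
  fixes f :: "nat set \<Rightarrow> real"
  assumes "Q {}"
  shows "(\<Sum>B | B \<subseteq> {..<n} \<and> \<not> Q B. f B) =
         (\<Sum>B | B \<subseteq> {..<n} \<and> B \<noteq> {}. f B) - (\<Sum>B | B \<subseteq> {..<n} \<and> B \<noteq> {} \<and> Q B. f B)"
proof -
  have "{B. B \<subseteq> {..<n} \<and> \<not> Q B} =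
        {B. B \<subseteq> {..<n} \<and> B \<noteq> {}} - {B. B \<subseteq> {..<n} \<and> B \<noteq> {} \<and> Q B}"
    using assms by auto
  then show ?thesis
    by (simp add: sum_diff finite_subset[of _ "Pow {..<n}"] subset_eq)
qed

lemma binomial_div_binomial_complement:
  assumes "1 \<le> l" "l \<le> n"
  shows "real (n choose l) / real ((n - 1) choose (n - l)) = real n / real l"
proof -
  have "(n - 1) choose (n - l) = (n - 1) choose (l - 1)"
    using assms binomial_symmetric[of "l - 1" "n - 1"] by simp
  moreover have "real l * real (n choose l) = real n * real ((n - 1) choose (l - 1))"
    using times_binomial_minus1_eq[of l n] assms by (metis of_nat_mult less_le_trans zero_less_one)
  moreover have "(n - 1) choose (l - 1) > 0"
    using assms by simp
  ultimately show ?thesis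
    using assms by (simp add: field_simps)
qed

lemma sum_nonempty_subsets_weight:
  "(\<Sum>B | B \<subseteq> {..<n} \<and> B \<noteq> {}. 1 / real ((n - 1) choose (n - card B))) = real n * harm n"
proof -
  have "(\<Sum>B | B \<subseteq> {..<n} \<and> B \<noteq> {}. 1 / real ((n - 1) choose (n - card B))) =
        (\<Sum>l=1..n. real (n choose l) * (1 / real ((n - 1) choose (n - l))))"
    using sum_nonempty_subsets_by_card[where Q = "\<lambda>_. True" and f = "\<lambda>l. 1 / real ((n - 1) choose (n - l))"]
    by (simp add: n_subsets)
  also have "\<dots> = (\<Sum>l=1..n. real n / real l)"
  proof (intro sum.cong refl)
    fix l assume "l \<in> {1..n}"
    then show "real (n choose l) * (1 / real ((n - 1) choose (n - l))) = real n / real l"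
      using binomial_div_binomial_complement[of l n] by simp
  qed
  also have "\<dots> = real n * harm n"
    by (simp add: harm_def sum_distrib_left divide_inverse)
  finally show ?thesis .
qed

lemma sum_indep_column_sets_weight:
  fixes h :: "nat \<Rightarrow> nat \<Rightarrow> 'a::{finite,field}"
  assumes H: "hamming_pcm r n h" and "r \<le> n"
  shows "(\<Sum>B | B \<subseteq> {..<n} \<and> B \<noteq> {} \<and> indep_columns r h B. 1 / real ((n - 1) choose (n - card B))) =
         (\<Sum>l=1..r. 1 / real ((n - 1) choose (n - l)) * (1 / fact l) *
            (\<Prod>i<l. (real CARD('a) ^ r - real CARD('a) ^ i) / (real CARD('a) - 1)))"
    (is "_ = (\<Sum>l=1..r. ?F l)")
proof -
  have "(\<Sum>B | B \<subseteq> {..<n} \<and> B \<noteq> {} \<and> indep_columns r h B. 1 / real ((n - 1) choose (n - card B))) =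
        (\<Sum>l=1..n. ?F l)"
    using sum_nonempty_subsets_by_card[where Q = "indep_columns r h" and f = "\<lambda>l. 1 / real ((n - 1) choose (n - l))"]
    by (simp add: card_indep_column_sets[OF H] mult_ac)
  also have "\<dots> = (\<Sum>l=1..r. ?F l)"
  proof (rule sum.mono_neutral_right)
    show "\<forall>l\<in>{1..n} - {1..r}. ?F l = 0"
      by (auto intro!: prod_zero bexI[of _ r])
  qed (use \<open>r \<le> n\<close> in auto)
  finally show ?thesis .
qed

lemma le_hamming_length:
  assumes "q \<ge> 2"
  shows "r \<le> (q ^ r - 1) div (q - 1)"
proof -
  have "real (1 + r * (q - 1)) \<le> real (q ^ r)"
    using Bernoulli_inequality[of "real q - 1" r] assms by (simp add: of_nat_diff)
  then have "r * (q - 1) \<le> q ^ r - 1"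
    by (simp only: of_nat_le_iff)
  then show ?thesis
    using assms by (simp add: less_eq_div_iff_mult_less_eq)
qed

theorem mainTheorem6:
  fixes r n k :: nat and h :: "nat \<Rightarrow> nat \<Rightarrow> 'a::{finite,field}" and g :: "nat \<Rightarrow> nat \<Rightarrow> 'a"
  defines "q \<equiv> CARD('a)"
  assumes "r \<ge> 2" and "(q, r) \<noteq> (2, 2)"
    and "n = (q ^ r - 1) div (q - 1)"
    and "hamming_pcm r n h"
    and "is_generator_matrix k n g (code_of_pcm r n h)"
  shows "(\<lambda>t. real t * stop_prob k n g t) sums
           (real n * harm n -
            (\<Sum>l=1..r. 1 / real ((n - 1) choose (n - l)) * (1 / fact l) *
               (\<Prod>i<l. (real q ^ r - real q ^ i) / (real q - 1))))"
proof -
  have "q \<ge> 2"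
    unfolding q_def by (rule card_field_ge_2)
  then have "r \<le> n"
    using le_hamming_length \<open>n = (q ^ r - 1) div (q - 1)\<close> by simp
  then have "n > 0"
    using \<open>r \<ge> 2\<close> by simp
  have "(\<lambda>t. real t * stop_prob k n g t) sums
          (\<Sum>B | B \<subseteq> {..<n} \<and> \<not> indep_columns r h B. 1 / real ((n - 1) choose (n - card B)))"
    by (rule sums_stop_prob[OF \<open>is_generator_matrix k n g (code_of_pcm r n h)\<close> \<open>n > 0\<close>])
  also have "\<dots> = (\<Sum>B | B \<subseteq> {..<n} \<and> B \<noteq> {}. 1 / real ((n - 1) choose (n - card B))) -
                  (\<Sum>B | B \<subseteq> {..<n} \<and> B \<noteq> {} \<and> indep_columns r h B.
                     1 / real ((n - 1) choose (n - card B)))"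
    by (rule sum_dependent_subsets[where Q = "indep_columns r h", OF indep_columns_empty])
  also have "\<dots> = real n * harm n -
                  (\<Sum>l=1..r. 1 / real ((n - 1) choose (n - l)) * (1 / fact l) *
                     (\<Prod>i<l. (real q ^ r - real q ^ i) / (real q - 1)))"
    unfolding sum_nonempty_subsets_weight q_def
      sum_indep_column_sets_weight[OF \<open>hamming_pcm r n h\<close> \<open>r \<le> n\<close>] ..
  finally show ?thesis .
qed

end
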